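(* Let $\mathcal F=\{F^c_{t,k}\}$ be an F-system and $R,\lambda$ reals such that $|F^A_t\cup F^B_t|\le Rt+\lambda$ for every positive integer $t$. Then for every even positive integer $t$, $|Z_{3t,2t}|\ge|S_t\cup Z_{3t/2,t}|-(3R-4)t-\lambda$.
   Context: F-system: a family $\mathcal F=\{F^c_{t,k}\}$ of sets of positive integers, indexed by $c\in\{A,B\}$ and integers $0<k\le t$, such that (F1) $|F^c_{t,k}|\ge k$ for all $c,t,k$; and (F2) $F^A_{t,k}\cap F^B_{t',k'}=\emptyset$ for all $k\le t$, $k'\le t'$ with $k+k'\le\max(t,t')$. Notation: $F^c_t=\bigcup_{0<\kappa\le\tau\le t}F^c_{\tau,\kappa}$ for $c\in\{A,B\}$; $S_t=F^A_t\cap F^B_t$; for even $t$, $Z_{3t/2,t}=F^A_{3t/2,t}\cap F^B_{3t/2,t}$ (so also $Z_{3t,2t}=F^A_{3t,2t}\cap F^B_{3t,2t}$). *)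

theory Defs
  imports Complex_Main
begin

datatype colour = A | B

text \<open>Values of F outside this index range are irrelevant.  Condition (F1) |F| >= k is
  read with the convention that an infinite set has cardinality infinity.\<close>

definition F_system :: "(colour \<Rightarrow> nat \<Rightarrow> nat \<Rightarrow> nat set) \<Rightarrow> bool" where
  "F_system F \<longleftrightarrow>
     (\<forall>c t k. 0 < k \<and> k \<le> t \<longrightarrow> F c t k \<subseteq> {0<..}) \<and>
     (\<forall>c t k. 0 < k \<and> k \<le> t \<longrightarrow> (infinite (F c t k) \<or> k \<le> card (F c t k))) \<and>
     (\<forall>t k t' k'. 0 < k \<and> k \<le> t \<and> 0 < k' \<and> k' \<le> t' \<and> k + k' \<le> max t t'
         \<longrightarrow> F A t k \<inter> F B t' k' = {})"

definition Fcum :: "(colour \<Rightarrow> nat \<Rightarrow> nat \<Rightarrow> nat set) \<Rightarrow> colour \<Rightarrow> nat \<Rightarrow> nat set" where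
  "Fcum F c t = (\<Union>\<tau>\<in>{1..t}. \<Union>\<kappa>\<in>{1..\<tau>}. F c \<tau> \<kappa>)"

definition Sset :: "(colour \<Rightarrow> nat \<Rightarrow> nat \<Rightarrow> nat set) \<Rightarrow> nat \<Rightarrow> nat set" where
  "Sset F t = Fcum F A t \<inter> Fcum F B t"

definition Zset :: "(colour \<Rightarrow> nat \<Rightarrow> nat \<Rightarrow> nat set) \<Rightarrow> nat \<Rightarrow> nat \<Rightarrow> nat set" where
  "Zset F t k = F A t k \<inter> F B t k"

end

theory Submission
  imports Defs
begin

(* Fix an even t > 0 and put P = F^A_{3t,2t}, Q = F^B_{3t,2t} and
   W = S_t \<union> Z_{3t/2,t}.  All of P, Q and W lie in U = F^A_{3t} \<union> F^B_{3t}, whose size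
   is at most 3Rt + \<lambda> by hypothesis.  Condition (F2) makes W disjoint from P \<union> Q:
   every index pair in S_t has \<tau> \<le> t, so \<kappa> + 2t \<le> 3t, and Z_{3t/2,t} has index
   sum t + 2t = 3t.  Inclusion-exclusion then gives
     |W| + |P| + |Q| \<le> |U| + |P \<inter> Q|,
   and (F1) gives |P|, |Q| \<ge> 2t, so |Z_{3t,2t}| = |P \<inter> Q| \<ge> |W| + 4t - 3Rt - \<lambda>. *)

lemma F_system_disjoint:
  assumes "F_system F" "0 < k" "k \<le> t" "0 < k'" "k' \<le> t'" "k + k' \<le> max t t'"
  shows "F A t k \<inter> F B t' k' = {}"
  using assms unfolding F_system_def by blast

lemma F_system_card:
  assumes "F_system F" "0 < k" "k \<le> t" "finite (F c t k)"
  shows "k \<le> card (F c t k)"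
  using assms unfolding F_system_def by blast

lemma F_subset_Fcum:
  assumes "0 < \<kappa>" "\<kappa> \<le> \<tau>" "\<tau> \<le> t"
  shows "F c \<tau> \<kappa> \<subseteq> Fcum F c t"
  using assms unfolding Fcum_def by force

lemma Fcum_mono:
  assumes "s \<le> t"
  shows "Fcum F c s \<subseteq> Fcum F c t"
  using assms unfolding Fcum_def by fastforce

lemma Fcum_disjoint:
  assumes "F_system F" "0 < k'" "k' \<le> t'" "t + k' \<le> t'"
  shows "Fcum F B t \<inter> F A t' k' = {}" and "Fcum F A t \<inter> F B t' k' = {}"
proof -
  have "F A t' k' \<inter> F B \<tau> \<kappa> = {}" "F A \<tau> \<kappa> \<inter> F B t' k' = {}"
    if "\<tau> \<in> {1..t}" "\<kappa> \<in> {1..\<tau>}" for \<tau> \<kappa>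
    using that assms F_system_disjoint[of F k' t' \<kappa> \<tau>] F_system_disjoint[of F \<kappa> \<tau> k' t']
    by auto
  then show "Fcum F B t \<inter> F A t' k' = {}" "Fcum F A t \<inter> F B t' k' = {}"
    unfolding Fcum_def by blast+
qed

lemma Sset_disjoint:
  assumes "F_system F" "0 < k'" "k' \<le> t'" "t + k' \<le> t'"
  shows "Sset F t \<inter> (F A t' k' \<union> F B t' k') = {}"
  using Fcum_disjoint[OF assms] unfolding Sset_def by blast

lemma Zset_disjoint:
  assumes "F_system F" "0 < k" "k \<le> s" "0 < k'" "k' \<le> t'" "k + k' \<le> max s t'"
  shows "Zset F s k \<inter> (F A t' k' \<union> F B t' k') = {}"
proof -
  have "F A t' k' \<inter> F B s k = {}"
    using assms by (intro F_system_disjoint) (auto simp: max.commute add.commute)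
  moreover have "F A s k \<inter> F B t' k' = {}"
    using assms by (intro F_system_disjoint) auto
  ultimately show ?thesis unfolding Zset_def by blast
qed

lemma card_disjoint_union_bound:
  assumes "finite U" "W \<union> P \<union> Q \<subseteq> U" "W \<inter> (P \<union> Q) = {}"
  shows "card W + card P + card Q \<le> card U + card (P \<inter> Q)"
proof -
  have fin: "finite W" "finite P" "finite Q"
    using assms(1,2) finite_subset by blast+
  have "card W + card (P \<union> Q) = card (W \<union> (P \<union> Q))"
    using fin assms(3) by (simp add: card_Un_disjoint)
  also have "\<dots> \<le> card U"
    using assms(1,2) by (intro card_mono) auto
  finally show ?thesis
    using card_Un_Int[OF fin(2,3)] by linarith
qed

theorem lemma5:
  fixes F :: "colour \<Rightarrow> nat \<Rightarrow> nat \<Rightarrow> nat set" and R lam :: real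
  assumes "F_system F"
    and "\<forall>t>0. finite (Fcum F A t \<union> Fcum F B t) \<and>
              real (card (Fcum F A t \<union> Fcum F B t)) \<le> R * real t + lam"
    and "even t" and "0 < t"
  shows "real (card (Zset F (3 * t) (2 * t)))
           \<ge> real (card (Sset F t \<union> Zset F (3 * t div 2) t)) - (3 * R - 4) * real t - lam"
proof -
  define U where "U = Fcum F A (3 * t) \<union> Fcum F B (3 * t)"
  define P where "P = F A (3 * t) (2 * t)"
  define Q where "Q = F B (3 * t) (2 * t)"
  define W where "W = Sset F t \<union> Zset F (3 * t div 2) t"
  have half: "t \<le> 3 * t div 2" "3 * t div 2 \<le> 3 * t" "t + 2 * t \<le> 3 * t div 2 + 2 * t"
    using \<open>even t\<close> by auto
  have U: "finite U" "real (card U) \<le> R * real (3 * t) + lam"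
    using spec[OF assms(2), of "3 * t"] \<open>0 < t\<close> unfolding U_def by auto
  have "F c (3 * t) (2 * t) \<subseteq> Fcum F c (3 * t)" "F c (3 * t div 2) t \<subseteq> Fcum F c (3 * t)"
    "Fcum F c t \<subseteq> Fcum F c (3 * t)" for c
    using \<open>0 < t\<close> half by (simp_all add: F_subset_Fcum Fcum_mono)
  then have sub: "W \<union> P \<union> Q \<subseteq> U"
    unfolding U_def W_def P_def Q_def Sset_def Zset_def by blast
  have "Sset F t \<inter> (P \<union> Q) = {}"
    unfolding P_def Q_def using \<open>0 < t\<close> by (intro Sset_disjoint[OF assms(1)]) auto
  moreover have "Zset F (3 * t div 2) t \<inter> (P \<union> Q) = {}"
    unfolding P_def Q_def using \<open>0 < t\<close> half by (intro Zset_disjoint[OF assms(1)]) auto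
  ultimately have disj: "W \<inter> (P \<union> Q) = {}" unfolding W_def by blast
  have "2 * t \<le> card P" "2 * t \<le> card Q"
    using sub U(1) \<open>0 < t\<close> finite_subset unfolding P_def Q_def
    by (auto intro!: F_system_card[OF assms(1)])
  with card_disjoint_union_bound[OF U(1) sub disj]
  have "real (card W) + 4 * real t \<le> real (card U) + real (card (P \<inter> Q))" by linarith
  with U(2) show ?thesis unfolding W_def P_def Q_def Zset_def by (simp add: algebra_simps)
qed

end
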